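(* Let $\Gamma=\mathrm{Cay}(G,S)$ be a connected bipartite Cayley graph on a finite group $G$, and let $H$ be the part of this bipartite graph containing the identity $e$ (a normal subgroup of index $2$ in $G$, with $S\subseteq G\setminus H$). Let $G'=H\rtimes\langle c\rangle$ be some semidirect product of $H$ with a group $\langle c\rangle$ of order $2$ (so $c\notin H$, $c^2=e$). Fix $a\in G\setminus H$, let $T_a=Sa^{-1}\subseteq H$ and $S'=T_ac\subseteq G'$. If $S'=S'^{-1}$ in $G'$, then the Cayley graph $\mathrm{Cay}(G',S')$ is isomorphic to $\mathrm{Cay}(G,S)$.
   Context: For a finite group $G$ with identity $e$ and a subset $S\subseteq G\setminus\{e\}$ with $S=S^{-1}$, the Cayley graph $\mathrm{Cay}(G,S)$ has vertex set $G$, two vertices $a,b$ being adjacent iff $ab^{-1}\in S$. *)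

theory Defs
  imports "HOL-Algebra.Algebra"
begin

definition cay_adj :: "('a, 'm) monoid_scheme \<Rightarrow> 'a set \<Rightarrow> 'a \<Rightarrow> 'a \<Rightarrow> bool" where
  "cay_adj G S a b \<longleftrightarrow> a \<in> carrier G \<and> b \<in> carrier G \<and> a \<otimes>\<^bsub>G\<^esub> inv\<^bsub>G\<^esub> b \<in> S"

definition cayley_set :: "('a, 'm) monoid_scheme \<Rightarrow> 'a set \<Rightarrow> bool" where
  "cayley_set G S \<longleftrightarrow> S \<subseteq> carrier G - {\<one>\<^bsub>G\<^esub>} \<and> (\<lambda>s. inv\<^bsub>G\<^esub> s) ` S = S"

definition cay_connected :: "('a, 'm) monoid_scheme \<Rightarrow> 'a set \<Rightarrow> bool" where
  "cay_connected G S \<longleftrightarrow> (\<forall>x\<in>carrier G. \<forall>y\<in>carrier G. rtranclp (cay_adj G S) x y)"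

definition cay_bipartition_part :: "('a, 'm) monoid_scheme \<Rightarrow> 'a set \<Rightarrow> 'a set \<Rightarrow> bool" where
  "cay_bipartition_part G S P \<longleftrightarrow> P \<subseteq> carrier G \<and>
     (\<forall>x y. cay_adj G S x y \<longrightarrow> (x \<in> P \<longleftrightarrow> y \<notin> P))"

definition cay_iso :: "('a, 'm) monoid_scheme \<Rightarrow> 'a set \<Rightarrow> ('b, 'n) monoid_scheme \<Rightarrow> 'b set \<Rightarrow> bool" where
  "cay_iso G S G' S' \<longleftrightarrow> (\<exists>f. bij_betw f (carrier G) (carrier G') \<and>
     (\<forall>x\<in>carrier G. \<forall>y\<in>carrier G. cay_adj G S x y \<longleftrightarrow> cay_adj G' S' (f x) (f y)))"

end

theory Submission
  imports Defs
begin

text \<open>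
  Connectivity forces the side H containing the identity to be a subgroup of index 2, with S
  contained in the other coset H a. Map H a to \<iota>(H) c by x \<mapsto> \<iota>(x a\<inverse>) c and H to \<iota>(H) by
  h \<mapsto> c \<iota>(a h a\<inverse>) c. For x \<notin> H and y \<in> H the images differ by \<iota>(x y\<inverse> a\<inverse>) c, which lies in
  S' = \<iota>(S a\<inverse>) c exactly when x y\<inverse> \<in> S; pairs on the same side are adjacent in neither graph.
\<close>

lemma (in group) mult_inv_cancel_left [simp]:
  "x \<in> carrier G \<Longrightarrow> y \<in> carrier G \<Longrightarrow> x \<otimes> (inv x \<otimes> y) = y"
  by (simp flip: m_assoc)

lemma (in group) inv_mult_cancel_left [simp]:
  "x \<in> carrier G \<Longrightarrow> y \<in> carrier G \<Longrightarrow> inv x \<otimes> (x \<otimes> y) = y"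
  by (simp flip: m_assoc)

lemma cay_iso_sym:
  assumes "cay_iso G S G' S'"
  shows "cay_iso G' S' G S"
proof -
  obtain f where f: "bij_betw f (carrier G) (carrier G')"
    and adj: "\<forall>x\<in>carrier G. \<forall>y\<in>carrier G. cay_adj G S x y \<longleftrightarrow> cay_adj G' S' (f x) (f y)"
    using assms unfolding cay_iso_def by blast
  let ?g = "inv_into (carrier G) f"
  have "bij_betw ?g (carrier G') (carrier G)"
    using f by (rule bij_betw_inv_into)
  moreover have "?g x' \<in> carrier G \<and> f (?g x') = x'" if "x' \<in> carrier G'" for x'
    using f that by (meson bij_betw_apply bij_betw_inv_into bij_betw_inv_into_right)
  ultimately show ?thesis
    unfolding cay_iso_def using adj by metis
qed

context group
begin

lemma cay_bipartition_part_mult_iff: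
  assumes S: "S \<subseteq> carrier G" and conn: "cay_connected G S"
    and bip: "cay_bipartition_part G S H" and one: "\<one> \<in> H"
    and x: "x \<in> carrier G" and y: "y \<in> carrier G"
  shows "x \<otimes> y \<in> H \<longleftrightarrow> (x \<in> H \<longleftrightarrow> y \<in> H)"
proof -
  \<comment> \<open>an edge u \<sim> z means u = s z with s \<in> S, and left multiplication by s switches sides\<close>
  have side_swap: "s \<otimes> z \<in> H \<longleftrightarrow> z \<notin> H" if "s \<in> S" "z \<in> carrier G" for s z
  proof -
    have "cay_adj G S (s \<otimes> z) z"
      using that S by (auto simp: cay_adj_def m_assoc)
    then show ?thesis using bip unfolding cay_bipartition_part_def by blast
  qed
  have "(cay_adj G S)\<^sup>*\<^sup>* x \<one>"
    using conn x unfolding cay_connected_def by blast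
  then show ?thesis using x y
  proof (induction arbitrary: y rule: converse_rtranclp_induct)
    case base
    then show ?case using one by simp
  next
    case (step u z)
    define s where "s = u \<otimes> inv z"
    have z: "z \<in> carrier G" and s: "s \<in> S" and u: "u = s \<otimes> z"
      using step.hyps(1) by (auto simp: cay_adj_def s_def m_assoc)
    have "u \<otimes> y = s \<otimes> (z \<otimes> y)"
      using u z s S step.prems by (auto simp: m_assoc)
    then show ?case
      using side_swap[OF s] step.IH[OF z step.prems(2)] z step.prems(2) u by auto
  qed
qed

lemma cay_bipartition_part_subgroup:
  assumes "S \<subseteq> carrier G" "cay_connected G S" "cay_bipartition_part G S H" "\<one> \<in> H"
  shows "subgroup H G"
proof (rule subgroupI)
  note mult_iff = cay_bipartition_part_mult_iff[OF assms]
  show H: "H \<subseteq> carrier G"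
    using assms(3) by (simp add: cay_bipartition_part_def)
  show "H \<noteq> {}"
    using assms(4) by blast
  show "inv h \<in> H" if "h \<in> H" for h
    using mult_iff[of h "inv h"] that H assms(4) by auto
  show "h \<otimes> k \<in> H" if "h \<in> H" "k \<in> H" for h k
    using mult_iff[of h k] that H by auto
qed

lemma cay_bipartition_part_disjoint:
  assumes "S \<subseteq> carrier G" "cay_bipartition_part G S H" "\<one> \<in> H"
  shows "S \<inter> H = {}"
proof -
  have "cay_adj G S s \<one>" if "s \<in> S" for s
    using assms(1) that by (auto simp: cay_adj_def)
  then show ?thesis
    using assms(2,3) unfolding cay_bipartition_part_def by blast
qed

end

locale bipartite_semidirect =
  G: group G + G': group G'
  for G :: "('a, 'm) monoid_scheme" (structure) and G' :: "('b, 'n) monoid_scheme" +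
  fixes S H :: "'a set" and \<iota> :: "'a \<Rightarrow> 'b" and c :: 'b and a :: 'a
  assumes cayley_set: "cayley_set G S" and connected: "cay_connected G S"
    and bipartition: "cay_bipartition_part G S H" and one_in_H: "\<one> \<in> H"
    and iota_hom: "\<iota> \<in> hom (G\<lparr>carrier := H\<rparr>) G'" and iota_inj: "inj_on \<iota> H"
    and iota_normal: "\<iota> ` H \<lhd> G'"
    and c_closed: "c \<in> carrier G'" and c_notin: "c \<notin> \<iota> ` H"
    and c_square: "c \<otimes>\<^bsub>G'\<^esub> c = \<one>\<^bsub>G'\<^esub>"
    and carrier_G': "carrier G' = \<iota> ` H \<union> (\<lambda>h. h \<otimes>\<^bsub>G'\<^esub> c) ` \<iota> ` H"
    and a_closed: "a \<in> carrier G" and a_notin_H: "a \<notin> H"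
  fixes S' :: "'b set"
  defines S'_def: "S' \<equiv> (\<lambda>t. \<iota> t \<otimes>\<^bsub>G'\<^esub> c) ` ((\<lambda>s. s \<otimes> inv a) ` S)"
  assumes S'_inv: "(\<lambda>s. inv\<^bsub>G'\<^esub> s) ` S' = S'"
begin

lemma S_subset: "S \<subseteq> carrier G"
  using cayley_set by (auto simp: cayley_set_def)

lemma S_inv_closed: "s \<in> S \<Longrightarrow> inv s \<in> S"
  using cayley_set by (auto simp: cayley_set_def)

lemma H_subset: "H \<subseteq> carrier G"
  using bipartition by (simp add: cay_bipartition_part_def)

lemma mult_mem_H_iff: "x \<in> carrier G \<Longrightarrow> y \<in> carrier G \<Longrightarrow> x \<otimes> y \<in> H \<longleftrightarrow> (x \<in> H \<longleftrightarrow> y \<in> H)"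
  using G.cay_bipartition_part_mult_iff S_subset connected bipartition one_in_H by blast

lemma subgroup_H: "subgroup H G"
  using G.cay_bipartition_part_subgroup S_subset connected bipartition one_in_H by blast

lemma inv_mem_H_iff: "x \<in> carrier G \<Longrightarrow> inv x \<in> H \<longleftrightarrow> x \<in> H"
  using mult_mem_H_iff[of x "inv x"] one_in_H by simp

lemma S_disjoint_H: "S \<inter> H = {}"
  using G.cay_bipartition_part_disjoint S_subset bipartition one_in_H by blast

lemma conj_a_mem_H: "x \<in> H \<Longrightarrow> a \<otimes> x \<otimes> inv a \<in> H"
  using mult_mem_H_iff[of a x] mult_mem_H_iff[of "a \<otimes> x" "inv a"] inv_mem_H_iff[of a]
    a_closed a_notin_H H_subset by auto

lemma mult_inv_a_mem_H: "x \<in> carrier G \<Longrightarrow> x \<notin> H \<Longrightarrow> x \<otimes> inv a \<in> H"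
  using mult_mem_H_iff[of x "inv a"] inv_mem_H_iff[of a] a_closed a_notin_H by auto

lemma iota_group_hom: "group_hom (G\<lparr>carrier := H\<rparr>) G' \<iota>"
  using subgroup.subgroup_is_group[OF subgroup_H G.group_axioms] G'.group_axioms iota_hom
  by (simp add: group_hom_def group_hom_axioms_def)

lemma iota_closed: "h \<in> H \<Longrightarrow> \<iota> h \<in> carrier G'"
  using iota_hom by (auto simp: hom_def)

lemma iota_mult: "h \<in> H \<Longrightarrow> k \<in> H \<Longrightarrow> \<iota> (h \<otimes> k) = \<iota> h \<otimes>\<^bsub>G'\<^esub> \<iota> k"
  using hom_mult[OF iota_hom] by simp

lemma iota_inv: "h \<in> H \<Longrightarrow> \<iota> (inv h) = inv\<^bsub>G'\<^esub> \<iota> h"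
  using group_hom.hom_inv[OF iota_group_hom] G.m_inv_consistent[OF subgroup_H] by simp

lemma inv_c: "inv\<^bsub>G'\<^esub> c = c"
  using G'.inv_equality[OF c_square c_closed c_closed] .

lemma c_c_cancel [simp]: "y \<in> carrier G' \<Longrightarrow> c \<otimes>\<^bsub>G'\<^esub> (c \<otimes>\<^bsub>G'\<^esub> y) = y"
  using c_closed c_square by (simp flip: G'.m_assoc)

lemma conj_c_mem_iota: "h \<in> H \<Longrightarrow> c \<otimes>\<^bsub>G'\<^esub> \<iota> h \<otimes>\<^bsub>G'\<^esub> c \<in> \<iota> ` H"
  using normal.inv_op_closed2[OF iota_normal c_closed] inv_c by simp

lemma iota_mult_c_notin: "h \<in> H \<Longrightarrow> \<iota> h \<otimes>\<^bsub>G'\<^esub> c \<notin> \<iota> ` H"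
proof
  assume h: "h \<in> H" and "\<iota> h \<otimes>\<^bsub>G'\<^esub> c \<in> \<iota> ` H"
  then obtain k where k: "k \<in> H" "\<iota> h \<otimes>\<^bsub>G'\<^esub> c = \<iota> k" by auto
  then have "c = \<iota> (inv h \<otimes> k)"
    using h iota_closed iota_mult iota_inv inv_mem_H_iff H_subset c_closed
    by (metis G'.inv_solve_left subsetD)
  then show False
    using c_notin h k subgroup_H by (metis image_eqI subgroup.m_closed subgroup.m_inv_closed)
qed

lemma S'_mem_iff: "h \<in> H \<Longrightarrow> \<iota> h \<otimes>\<^bsub>G'\<^esub> c \<in> S' \<longleftrightarrow> h \<otimes> a \<in> S"
proof
  assume h: "h \<in> H" and "\<iota> h \<otimes>\<^bsub>G'\<^esub> c \<in> S'"
  then obtain s where s: "s \<in> S" "\<iota> h \<otimes>\<^bsub>G'\<^esub> c = \<iota> (s \<otimes> inv a) \<otimes>\<^bsub>G'\<^esub> c"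
    unfolding S'_def by auto
  have "s \<otimes> inv a \<in> H"
    using s(1) S_subset S_disjoint_H by (auto intro: mult_inv_a_mem_H)
  then have "h = s \<otimes> inv a"
    using s(2) h iota_closed c_closed iota_inj by (simp add: inj_on_eq_iff)
  then show "h \<otimes> a \<in> S"
    using s(1) S_subset a_closed by (auto simp: G.m_assoc)
next
  assume h: "h \<in> H" and "h \<otimes> a \<in> S"
  moreover have "h = (h \<otimes> a) \<otimes> inv a"
    using h H_subset a_closed by (auto simp: G.m_assoc)
  ultimately show "\<iota> h \<otimes>\<^bsub>G'\<^esub> c \<in> S'"
    unfolding S'_def by (metis image_eqI)
qed

lemma S'_disjoint_iota: "S' \<inter> \<iota> ` H = {}"
  using iota_mult_c_notin S_subset S_disjoint_H mult_inv_a_mem_H unfolding S'_def by blast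

lemma S'_inv_closed: "t \<in> S' \<Longrightarrow> inv\<^bsub>G'\<^esub> t \<in> S'"
  using S'_inv by blast

definition to_semidirect :: "'a \<Rightarrow> 'b" where
  "to_semidirect x = (if x \<in> H then c \<otimes>\<^bsub>G'\<^esub> \<iota> (a \<otimes> x \<otimes> inv a) \<otimes>\<^bsub>G'\<^esub> c
                      else \<iota> (x \<otimes> inv a) \<otimes>\<^bsub>G'\<^esub> c)"

lemma to_semidirect_closed: "x \<in> carrier G \<Longrightarrow> to_semidirect x \<in> carrier G'"
  using conj_a_mem_H mult_inv_a_mem_H iota_closed c_closed by (simp add: to_semidirect_def)

lemma to_semidirect_mem_iota_iff: "x \<in> carrier G \<Longrightarrow> to_semidirect x \<in> \<iota> ` H \<longleftrightarrow> x \<in> H"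
  using conj_c_mem_iota[OF conj_a_mem_H] iota_mult_c_notin[OF mult_inv_a_mem_H]
  by (simp add: to_semidirect_def)

lemma to_semidirect_inj: "inj_on to_semidirect (carrier G)"
proof (rule inj_onI)
  fix x y assume x: "x \<in> carrier G" and y: "y \<in> carrier G" and eq: "to_semidirect x = to_semidirect y"
  then have same_part: "x \<in> H \<longleftrightarrow> y \<in> H"
    using to_semidirect_mem_iota_iff by metis
  show "x = y"
  proof (cases "x \<in> H")
    case True
    then have "\<iota> (a \<otimes> x \<otimes> inv a) = \<iota> (a \<otimes> y \<otimes> inv a)"
      using eq same_part conj_a_mem_H iota_closed c_closed
      by (simp add: to_semidirect_def G'.m_assoc)
    then have "a \<otimes> x \<otimes> inv a = a \<otimes> y \<otimes> inv a"
      using True same_part conj_a_mem_H iota_inj by (simp add: inj_on_eq_iff)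
    then show ?thesis using x y a_closed by simp
  next
    case False
    then have "\<iota> (x \<otimes> inv a) = \<iota> (y \<otimes> inv a)"
      using eq x y same_part mult_inv_a_mem_H iota_closed c_closed
      by (simp add: to_semidirect_def)
    then have "x \<otimes> inv a = y \<otimes> inv a"
      using False x y same_part mult_inv_a_mem_H iota_inj by (simp add: inj_on_eq_iff)
    then show ?thesis using x y a_closed by simp
  qed
qed

lemma to_semidirect_surj: "to_semidirect ` carrier G = carrier G'"
proof
  show "to_semidirect ` carrier G \<subseteq> carrier G'"
    using to_semidirect_closed by blast
  have "\<iota> h \<in> to_semidirect ` carrier G" if h: "h \<in> H" for h
  proof -
    obtain k where k: "k \<in> H" "\<iota> k = c \<otimes>\<^bsub>G'\<^esub> \<iota> h \<otimes>\<^bsub>G'\<^esub> c"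
      using conj_c_mem_iota[OF h] by auto
    define y where "y = inv a \<otimes> k \<otimes> a"
    have "a \<otimes> y \<otimes> inv a = k"
      using k(1) H_subset a_closed by (auto simp: y_def G.m_assoc)
    moreover have y: "y \<in> H"
      using conj_a_mem_H[of k] k(1) H_subset a_closed mult_mem_H_iff inv_mem_H_iff a_notin_H
      by (auto simp: y_def)
    ultimately have "to_semidirect y = \<iota> h"
      using k(2) h iota_closed c_closed c_square by (simp add: to_semidirect_def G'.m_assoc)
    then show ?thesis using y H_subset by (metis image_eqI subsetD)
  qed
  moreover have "\<iota> h \<otimes>\<^bsub>G'\<^esub> c \<in> to_semidirect ` carrier G" if h: "h \<in> H" for h
  proof -
    have ha: "h \<otimes> a \<in> carrier G - H"
      using h H_subset a_closed a_notin_H mult_mem_H_iff by auto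
    then have "to_semidirect (h \<otimes> a) = \<iota> h \<otimes>\<^bsub>G'\<^esub> c"
      using h H_subset a_closed by (auto simp: to_semidirect_def G.m_assoc)
    then show ?thesis using ha by (metis DiffD1 image_eqI)
  qed
  ultimately show "carrier G' \<subseteq> to_semidirect ` carrier G"
    using carrier_G' by auto
qed

lemma to_semidirect_bij: "bij_betw to_semidirect (carrier G) (carrier G')"
  using to_semidirect_inj to_semidirect_surj by (rule bij_betw_imageI)

lemma to_semidirect_diff_cross:
  assumes x: "x \<in> carrier G" "x \<notin> H" and y: "y \<in> H"
  shows "to_semidirect x \<otimes>\<^bsub>G'\<^esub> inv\<^bsub>G'\<^esub> to_semidirect y = \<iota> (x \<otimes> inv y \<otimes> inv a) \<otimes>\<^bsub>G'\<^esub> c"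
proof -
  define p where "p = a \<otimes> y \<otimes> inv a"
  define q where "q = x \<otimes> inv a"
  have p: "p \<in> H" and q: "q \<in> H"
    using conj_a_mem_H[OF y] mult_inv_a_mem_H[OF x] by (simp_all add: p_def q_def)
  have "inv\<^bsub>G'\<^esub> to_semidirect y = c \<otimes>\<^bsub>G'\<^esub> \<iota> (inv p) \<otimes>\<^bsub>G'\<^esub> c"
    using y p iota_closed c_closed
    by (simp add: to_semidirect_def p_def[symmetric] G'.inv_mult_group inv_c iota_inv G'.m_assoc)
  then have "to_semidirect x \<otimes>\<^bsub>G'\<^esub> inv\<^bsub>G'\<^esub> to_semidirect y = \<iota> (q \<otimes> inv p) \<otimes>\<^bsub>G'\<^esub> c"
    using x p q iota_closed c_closed H_subset
    by (simp add: to_semidirect_def q_def[symmetric] iota_mult subgroup.m_inv_closed[OF subgroup_H] G'.m_assoc)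
  moreover have "q \<otimes> inv p = x \<otimes> inv y \<otimes> inv a"
    using x y a_closed H_subset by (auto simp: p_def q_def G.inv_mult_group G.m_assoc)
  ultimately show ?thesis by simp
qed

lemma to_semidirect_diff_same:
  assumes x: "x \<in> carrier G" and y: "y \<in> carrier G" and same_part: "x \<in> H \<longleftrightarrow> y \<in> H"
  shows "to_semidirect x \<otimes>\<^bsub>G'\<^esub> inv\<^bsub>G'\<^esub> to_semidirect y \<in> \<iota> ` H"
proof (cases "x \<in> H")
  case True
  define p where "p = a \<otimes> x \<otimes> inv a"
  define p' where "p' = a \<otimes> y \<otimes> inv a"
  have p: "p \<in> H" "p' \<in> H" "p \<otimes> inv p' \<in> H"
    using True same_part conj_a_mem_H subgroup_H
    by (simp_all add: p_def p'_def subgroup.m_closed subgroup.m_inv_closed)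
  have "to_semidirect x \<otimes>\<^bsub>G'\<^esub> inv\<^bsub>G'\<^esub> to_semidirect y = c \<otimes>\<^bsub>G'\<^esub> \<iota> (p \<otimes> inv p') \<otimes>\<^bsub>G'\<^esub> c"
    using True same_part p iota_closed c_closed subgroup_H
    by (simp add: to_semidirect_def p_def[symmetric] p'_def[symmetric] G'.inv_mult_group inv_c
        iota_inv iota_mult subgroup.m_inv_closed G'.m_assoc)
  then show ?thesis using conj_c_mem_iota p(3) by simp
next
  case False
  define q where "q = x \<otimes> inv a"
  define q' where "q' = y \<otimes> inv a"
  have q: "q \<in> H" "q' \<in> H" "q \<otimes> inv q' \<in> H"
    using False same_part x y mult_inv_a_mem_H subgroup_H
    by (simp_all add: q_def q'_def subgroup.m_closed subgroup.m_inv_closed)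
  have "to_semidirect x \<otimes>\<^bsub>G'\<^esub> inv\<^bsub>G'\<^esub> to_semidirect y = \<iota> (q \<otimes> inv q')"
    using False same_part q iota_closed c_closed subgroup_H
    by (simp add: to_semidirect_def q_def[symmetric] q'_def[symmetric] G'.inv_mult_group inv_c
        iota_inv iota_mult subgroup.m_inv_closed G'.m_assoc)
  then show ?thesis using q(3) by simp
qed

lemma to_semidirect_diff_mem_S'_iff:
  assumes x: "x \<in> carrier G" and y: "y \<in> carrier G"
  shows "to_semidirect x \<otimes>\<^bsub>G'\<^esub> inv\<^bsub>G'\<^esub> to_semidirect y \<in> S' \<longleftrightarrow> x \<otimes> inv y \<in> S"
proof -
  have cross: "to_semidirect u \<otimes>\<^bsub>G'\<^esub> inv\<^bsub>G'\<^esub> to_semidirect v \<in> S' \<longleftrightarrow> u \<otimes> inv v \<in> S"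
    if u: "u \<in> carrier G" "u \<notin> H" and v: "v \<in> H" for u v
  proof -
    have "u \<otimes> inv v \<otimes> inv a \<in> H"
      using u v H_subset mult_inv_a_mem_H mult_mem_H_iff inv_mem_H_iff by auto
    then show ?thesis
      using S'_mem_iff to_semidirect_diff_cross[OF u v] u v H_subset a_closed
      by (auto simp: G.m_assoc)
  qed
  consider "x \<in> H \<longleftrightarrow> y \<in> H" | "x \<notin> H" "y \<in> H" | "x \<in> H" "y \<notin> H"
    by blast
  then show ?thesis
  proof cases
    case 1
    then have "x \<otimes> inv y \<in> H"
      using x y mult_mem_H_iff inv_mem_H_iff by auto
    then show ?thesis
      using to_semidirect_diff_same[OF x y 1] S'_disjoint_iota S_disjoint_H by blast
  next
    case 2
    then show ?thesis using cross x by blast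
  next
    case 3
    have "inv\<^bsub>G'\<^esub> (to_semidirect x \<otimes>\<^bsub>G'\<^esub> inv\<^bsub>G'\<^esub> to_semidirect y)
            = to_semidirect y \<otimes>\<^bsub>G'\<^esub> inv\<^bsub>G'\<^esub> to_semidirect x"
      using x y to_semidirect_closed by (simp add: G'.inv_mult_group)
    moreover have "inv (x \<otimes> inv y) = y \<otimes> inv x"
      using x y by (simp add: G.inv_mult_group)
    ultimately show ?thesis
      using cross[OF y 3(2) 3(1)] S'_inv_closed S_inv_closed x y to_semidirect_closed
      by (metis G.inv_closed G.inv_inv G.m_closed G'.inv_closed G'.inv_inv G'.m_closed)
  qed
qed

lemma cay_iso_to_semidirect: "cay_iso G S G' S'"
  unfolding cay_iso_def cay_adj_def
  using to_semidirect_bij to_semidirect_closed to_semidirect_diff_mem_S'_iff by blast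

end

theorem lemma3p3:
  fixes G :: "('a, 'm) monoid_scheme" and G' :: "('b, 'n) monoid_scheme"
    and S H :: "'a set" and \<iota> :: "'a \<Rightarrow> 'b" and c :: 'b and a :: 'a
  assumes grp: "group G" and fin: "finite (carrier G)"
    and cS: "cayley_set G S"
    and conn: "cay_connected G S"
    and bip: "cay_bipartition_part G S H" and eH: "\<one>\<^bsub>G\<^esub> \<in> H"
    and grp': "group G'"
    and hom: "\<iota> \<in> hom (G\<lparr>carrier := H\<rparr>) G'" and inj: "inj_on \<iota> H"
    and nrm: "\<iota> ` H \<lhd> G'"
    and c: "c \<in> carrier G'" "c \<notin> \<iota> ` H" "c \<otimes>\<^bsub>G'\<^esub> c = \<one>\<^bsub>G'\<^esub>"
    and car: "carrier G' = \<iota> ` H \<union> (\<lambda>h. h \<otimes>\<^bsub>G'\<^esub> c) ` \<iota> ` H"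
    and a: "a \<in> carrier G - H"
    and symm: "(\<lambda>s. inv\<^bsub>G'\<^esub> s) ` ((\<lambda>t. \<iota> t \<otimes>\<^bsub>G'\<^esub> c) ` ((\<lambda>s. s \<otimes>\<^bsub>G\<^esub> inv\<^bsub>G\<^esub> a) ` S))
               = (\<lambda>t. \<iota> t \<otimes>\<^bsub>G'\<^esub> c) ` ((\<lambda>s. s \<otimes>\<^bsub>G\<^esub> inv\<^bsub>G\<^esub> a) ` S)"
  shows "cay_iso G' ((\<lambda>t. \<iota> t \<otimes>\<^bsub>G'\<^esub> c) ` ((\<lambda>s. s \<otimes>\<^bsub>G\<^esub> inv\<^bsub>G\<^esub> a) ` S)) G S"
proof -
  interpret bipartite_semidirect G G' S H \<iota> c a
      "(\<lambda>t. \<iota> t \<otimes>\<^bsub>G'\<^esub> c) ` ((\<lambda>s. s \<otimes>\<^bsub>G\<^esub> inv\<^bsub>G\<^esub> a) ` S)"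
    using assms by (simp add: bipartite_semidirect_def bipartite_semidirect_axioms_def)
  show ?thesis
    using cay_iso_sym[OF cay_iso_to_semidirect] .
qed

end
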